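(* Let $\epsilon\in\,]0,1[$. The mapping $K\mapsto \mathcal{P}^-(K,\epsilon)$ induces a functor from the category $\square^{op}\mathbf{Set}$ of precubical sets to the category ${\mathbf{Top}}$ of topological spaces.
   Context: ${\mathbf{Top}}$ denotes the category of $\Delta$-generated spaces (or of $\Delta$-Hausdorff $\Delta$-generated spaces), with internal hom $\mathbf{TOP}(-,-)$ (the $\Delta$-kelleyfication of the compact-open topology). $\square$ is the box category (objects $[n]=\{0,1\}^n$, $n\geqslant 0$, generated by the coface maps $\delta_i^\alpha$) and $\square^{op}\mathbf{Set}$ is the category of precubical sets (presheaves over $\square$). For a precubical set $K$, $|K|_{geom}=\int^{[n]\in\square}K_n.[0,1]^n$ is its geometric realization, and each $n$-cube $c$ induces a map $|c|_{geom}:[0,1]^n\to |K|_{geom}$. The initial vertex of an $n$-cube $c$ is $c^-=\partial_1^0\cdots\partial_n^0c$, and for $\alpha\in K_0$, $\mathcal{C}^-_\alpha(K)=\{c\in K\mid \dim(c)\geqslant 1,\ c^-=\alpha\}$. Let $0_n=(0,\dots,0)$. For $n\geqslant 1$ and $0<\epsilon<1$, $N_n(\epsilon)$ is the set of natural directed paths $\phi=(\phi_1,\dots,\phi_n):[0,\epsilon]\to[0,1]^n$ (continuous, non-decreasing in each coordinate, with $\phi_1(t)+\dots+\phi_n(t)=t$ for all $t$, so that $\phi(0)=0_n$), equipped with the $\Delta$-kelleyfication of the relative topology from $\mathbf{TOP}([0,\epsilon],[0,1]^n)$. The homotopy branching space is $\mathcal{P}^-(K,\epsilon)=\coprod_{\alpha\in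 K_0}\mathcal{P}^-_\alpha(K,\epsilon)$, where $\mathcal{P}^-_\alpha(K,\epsilon)=\{|c|_{geom}\phi\mid c\in\mathcal{C}^-_\alpha(K),\ \phi\in N_{\dim(c)}(\epsilon)\}$ carries the $\Delta$-kelleyfication of the relative topology from $\mathbf{TOP}([0,\epsilon],|K|_{geom})$. *)

theory Defs
  imports "HOL-Analysis.Analysis" "HOL-Homology.Simplices" "HOL-Library.FuncSet"
begin

definition final_open :: "'a set \<Rightarrow> ('b topology \<times> ('b \<Rightarrow> 'a)) set \<Rightarrow> 'a set \<Rightarrow> bool" where
  "final_open S F U \<longleftrightarrow> U \<subseteq> S \<and>
     (\<forall>p \<in> F. openin (fst p) {x \<in> topspace (fst p). snd p x \<in> U})"

lemma istopology_final_open: "istopology (final_open S F)"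
  unfolding istopology_def
proof (intro conjI allI impI)
  fix U V assume U: "final_open S F U" and V: "final_open S F V"
  have "openin (fst p) {x \<in> topspace (fst p). snd p x \<in> U \<inter> V}" if "p \<in> F" for p
  proof -
    have "openin (fst p) ({x \<in> topspace (fst p). snd p x \<in> U} \<inter> {x \<in> topspace (fst p). snd p x \<in> V})"
      using U V that unfolding final_open_def by (intro openin_Int) auto
    moreover have "{x \<in> topspace (fst p). snd p x \<in> U} \<inter> {x \<in> topspace (fst p). snd p x \<in> V}
        = {x \<in> topspace (fst p). snd p x \<in> U \<inter> V}" by auto
    ultimately show ?thesis by simp
  qed
  then show "final_open S F (U \<inter> V)" using U unfolding final_open_def by auto
next
  fix K assume K: "\<forall>U\<in>K. final_open S F U"
  have "openin (fst p) {x \<in> topspace (fst p). snd p x \<in> \<Union>K}" if "p \<in> F" for p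
  proof -
    have "openin (fst p) (\<Union>U\<in>K. {x \<in> topspace (fst p). snd p x \<in> U})"
      using K that unfolding final_open_def by (intro openin_Union) auto
    moreover have "(\<Union>U\<in>K. {x \<in> topspace (fst p). snd p x \<in> U}) = {x \<in> topspace (fst p). snd p x \<in> \<Union>K}" by auto
    ultimately show ?thesis by simp
  qed
  then show "final_open S F (\<Union>K)" using K unfolding final_open_def by auto
qed

definition final_topology :: "'a set \<Rightarrow> ('b topology \<times> ('b \<Rightarrow> 'a)) set \<Rightarrow> 'a topology" where
  "final_topology S F = topology (final_open S F)"

lemma openin_final_topology: "openin (final_topology S F) U \<longleftrightarrow> final_open S F U"
  unfolding final_topology_def by (simp add: istopology_final_open)

definition simplex_top :: "nat \<Rightarrow> (nat \<Rightarrow> real) topology" where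
  "simplex_top n = subtopology (powertop_real UNIV) (standard_simplex n)"

definition delta_kelleyfy :: "'a topology \<Rightarrow> 'a topology" where
  "delta_kelleyfy X = final_topology (topspace X)
     {(simplex_top n, \<sigma>) | n \<sigma>. continuous_map (simplex_top n) X \<sigma>}"

definition delta_generated :: "'a topology \<Rightarrow> bool" where
  "delta_generated X \<longleftrightarrow> delta_kelleyfy X = X"

definition interval_top :: "real \<Rightarrow> real topology" where
  "interval_top e = top_of_set {0..e}"

definition path_carrier :: "real \<Rightarrow> 'a topology \<Rightarrow> (real \<Rightarrow> 'a) set" where
  "path_carrier e X = {\<gamma>. \<gamma> \<in> extensional {0..e} \<and> continuous_map (interval_top e) X \<gamma>}"

definition compact_open :: "real \<Rightarrow> 'a topology \<Rightarrow> (real \<Rightarrow> 'a) topology" where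
  "compact_open e X = topology_generated_by
     (insert (path_carrier e X)
       {{\<gamma> \<in> path_carrier e X. \<gamma> ` C \<subseteq> U} | C U. compact C \<and> C \<subseteq> {0..e} \<and> openin X U})"

definition TOP :: "real \<Rightarrow> 'a topology \<Rightarrow> (real \<Rightarrow> 'a) topology" where
  "TOP e X = delta_kelleyfy (compact_open e X)"

text \<open>A precubical set is given by sets K n of n-cubes and face maps
  d n i a : K n -> K (n-1) (for 1 <= i <= n), the map written \<partial>_i^a, where
  a = False means 0 and a = True means 1, subject to the precubical identities
  \<partial>_i^a \<partial>_j^b = \<partial>_(j-1)^b \<partial>_i^a for i < j.\<close>

definition precubical :: "(nat \<Rightarrow> 'a set) \<Rightarrow> (nat \<Rightarrow> nat \<Rightarrow> bool \<Rightarrow> 'a \<Rightarrow> 'a) \<Rightarrow> bool" where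
  "precubical K d \<longleftrightarrow>
     (\<forall>n i a c. c \<in> K (Suc n) \<and> 1 \<le> i \<and> i \<le> Suc n \<longrightarrow> d (Suc n) i a c \<in> K n) \<and>
     (\<forall>n i j a b c. c \<in> K (Suc (Suc n)) \<and> 1 \<le> i \<and> i < j \<and> j \<le> Suc (Suc n) \<longrightarrow>
        d (Suc n) i a (d (Suc (Suc n)) j b c) = d (Suc n) (j - 1) b (d (Suc (Suc n)) i a c))"

definition precubical_map ::
  "(nat \<Rightarrow> 'a set) \<Rightarrow> (nat \<Rightarrow> nat \<Rightarrow> bool \<Rightarrow> 'a \<Rightarrow> 'a) \<Rightarrow>
   (nat \<Rightarrow> 'b set) \<Rightarrow> (nat \<Rightarrow> nat \<Rightarrow> bool \<Rightarrow> 'b \<Rightarrow> 'b) \<Rightarrow> (nat \<Rightarrow> 'a \<Rightarrow> 'b) \<Rightarrow> bool" where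
  "precubical_map K dK L dL f \<longleftrightarrow>
     (\<forall>n. \<forall>c \<in> K n. f n c \<in> L n) \<and>
     (\<forall>n i a c. c \<in> K (Suc n) \<and> 1 \<le> i \<and> i \<le> Suc n \<longrightarrow>
        f n (dK (Suc n) i a c) = dL (Suc n) i a (f (Suc n) c))"

definition cube :: "nat \<Rightarrow> (nat \<Rightarrow> real) set" where
  "cube n = {t. (\<forall>k<n. 0 \<le> t k \<and> t k \<le> 1) \<and> (\<forall>k\<ge>n. t k = 0)}"

definition cube_top :: "nat \<Rightarrow> (nat \<Rightarrow> real) topology" where
  "cube_top n = subtopology (powertop_real UNIV) (cube n)"

text \<open>The coface map \<delta>_i^a : [0,1]^(n-1) -> [0,1]^n inserting a at (1-based) position i.\<close>
definition coface :: "nat \<Rightarrow> bool \<Rightarrow> (nat \<Rightarrow> real) \<Rightarrow> (nat \<Rightarrow> real)" where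
  "coface i a s = (\<lambda>k. if k < i - 1 then s k else if k = i - 1 then (if a then 1 else 0) else s (k - 1))"

definition cells_top :: "(nat \<Rightarrow> 'a set) \<Rightarrow> (nat \<times> ('a \<times> (nat \<Rightarrow> real))) topology" where
  "cells_top K = sum_topology (\<lambda>n. prod_topology (discrete_topology (K n)) (cube_top n)) UNIV"

text \<open>Generating relation of the coend: (n-1, \<partial>_i^a c, s) ~ (n, c, \<delta>_i^a s).\<close>
definition real_rel :: "(nat \<Rightarrow> 'a set) \<Rightarrow> (nat \<Rightarrow> nat \<Rightarrow> bool \<Rightarrow> 'a \<Rightarrow> 'a) \<Rightarrow>
    (nat \<times> ('a \<times> (nat \<Rightarrow> real))) \<Rightarrow> (nat \<times> ('a \<times> (nat \<Rightarrow> real))) \<Rightarrow> bool" where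
  "real_rel K d x y \<longleftrightarrow> (\<exists>n c i a s. c \<in> K (Suc n) \<and> 1 \<le> i \<and> i \<le> Suc n \<and> s \<in> cube n \<and>
      x = (n, (d (Suc n) i a c, s)) \<and> y = (Suc n, (c, coface i a s)))"

definition real_class :: "(nat \<Rightarrow> 'a set) \<Rightarrow> (nat \<Rightarrow> nat \<Rightarrow> bool \<Rightarrow> 'a \<Rightarrow> 'a) \<Rightarrow>
    (nat \<times> ('a \<times> (nat \<Rightarrow> real))) \<Rightarrow> (nat \<times> ('a \<times> (nat \<Rightarrow> real))) set" where
  "real_class K d x = {y. (symclp (real_rel K d))\<^sup>*\<^sup>* x y}"

definition geom_real :: "(nat \<Rightarrow> 'a set) \<Rightarrow> (nat \<Rightarrow> nat \<Rightarrow> bool \<Rightarrow> 'a \<Rightarrow> 'a) \<Rightarrow>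
    (nat \<times> ('a \<times> (nat \<Rightarrow> real))) set topology" where
  "geom_real K d = final_topology (real_class K d ` topspace (cells_top K))
     {(cells_top K, real_class K d)}"

definition geom_cube :: "(nat \<Rightarrow> 'a set) \<Rightarrow> (nat \<Rightarrow> nat \<Rightarrow> bool \<Rightarrow> 'a \<Rightarrow> 'a) \<Rightarrow> nat \<Rightarrow> 'a \<Rightarrow>
    (nat \<Rightarrow> real) \<Rightarrow> (nat \<times> ('a \<times> (nat \<Rightarrow> real))) set" where
  "geom_cube K d n c t = real_class K d (n, (c, t))"

definition geom_map :: "(nat \<Rightarrow> 'b set) \<Rightarrow> (nat \<Rightarrow> nat \<Rightarrow> bool \<Rightarrow> 'b \<Rightarrow> 'b) \<Rightarrow> (nat \<Rightarrow> 'a \<Rightarrow> 'b) \<Rightarrow>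
    (nat \<times> ('a \<times> (nat \<Rightarrow> real))) set \<Rightarrow> (nat \<times> ('b \<times> (nat \<Rightarrow> real))) set" where
  "geom_map L dL f x = (case SOME p. p \<in> x of (n, (c, t)) \<Rightarrow> real_class L dL (n, (f n c, t)))"

text \<open>Initial vertex c^- = \<partial>_1^0 ... \<partial>_n^0 c of an n-cube.\<close>
primrec init_vertex :: "(nat \<Rightarrow> nat \<Rightarrow> bool \<Rightarrow> 'a \<Rightarrow> 'a) \<Rightarrow> nat \<Rightarrow> 'a \<Rightarrow> 'a" where
  "init_vertex d 0 c = c"
| "init_vertex d (Suc n) c = init_vertex d n (d (Suc n) (Suc n) False c)"

definition init_cubes :: "(nat \<Rightarrow> 'a set) \<Rightarrow> (nat \<Rightarrow> nat \<Rightarrow> bool \<Rightarrow> 'a \<Rightarrow> 'a) \<Rightarrow> 'a \<Rightarrow> (nat \<times> 'a) set" where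
  "init_cubes K d \<alpha> = {(n, c). 1 \<le> n \<and> c \<in> K n \<and> init_vertex d n c = \<alpha>}"

definition natural_paths :: "nat \<Rightarrow> real \<Rightarrow> (real \<Rightarrow> (nat \<Rightarrow> real)) set" where
  "natural_paths n e = {\<phi>. \<phi> \<in> extensional {0..e} \<and>
      continuous_map (interval_top e) (cube_top n) \<phi> \<and>
      (\<forall>k<n. \<forall>s s'. 0 \<le> s \<and> s \<le> s' \<and> s' \<le> e \<longrightarrow> \<phi> s k \<le> \<phi> s' k) \<and>
      (\<forall>s\<in>{0..e}. (\<Sum>k<n. \<phi> s k) = s)}"

definition Pminus_set :: "(nat \<Rightarrow> 'a set) \<Rightarrow> (nat \<Rightarrow> nat \<Rightarrow> bool \<Rightarrow> 'a \<Rightarrow> 'a) \<Rightarrow> real \<Rightarrow> 'a \<Rightarrow>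
    (real \<Rightarrow> (nat \<times> ('a \<times> (nat \<Rightarrow> real))) set) set" where
  "Pminus_set K d e \<alpha> = {restrict (geom_cube K d n c \<circ> \<phi>) {0..e} | n c \<phi>.
      (n, c) \<in> init_cubes K d \<alpha> \<and> \<phi> \<in> natural_paths n e}"

definition Pminus_alpha :: "(nat \<Rightarrow> 'a set) \<Rightarrow> (nat \<Rightarrow> nat \<Rightarrow> bool \<Rightarrow> 'a \<Rightarrow> 'a) \<Rightarrow> real \<Rightarrow> 'a \<Rightarrow>
    (real \<Rightarrow> (nat \<times> ('a \<times> (nat \<Rightarrow> real))) set) topology" where
  "Pminus_alpha K d e \<alpha> = delta_kelleyfy (subtopology (TOP e (geom_real K d)) (Pminus_set K d e \<alpha>))"

definition Pminus :: "(nat \<Rightarrow> 'a set) \<Rightarrow> (nat \<Rightarrow> nat \<Rightarrow> bool \<Rightarrow> 'a \<Rightarrow> 'a) \<Rightarrow> real \<Rightarrow>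
    ('a \<times> (real \<Rightarrow> (nat \<times> ('a \<times> (nat \<Rightarrow> real))) set)) topology" where
  "Pminus K d e = sum_topology (Pminus_alpha K d e) (K 0)"

definition Pminus_map :: "(nat \<Rightarrow> 'b set) \<Rightarrow> (nat \<Rightarrow> nat \<Rightarrow> bool \<Rightarrow> 'b \<Rightarrow> 'b) \<Rightarrow> (nat \<Rightarrow> 'a \<Rightarrow> 'b) \<Rightarrow> real \<Rightarrow>
    'a \<times> (real \<Rightarrow> (nat \<times> ('a \<times> (nat \<Rightarrow> real))) set) \<Rightarrow>
    'b \<times> (real \<Rightarrow> (nat \<times> ('b \<times> (nat \<Rightarrow> real))) set)" where
  "Pminus_map L dL f e p = (f 0 (fst p), restrict (geom_map L dL f \<circ> snd p) {0..e})"

end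

theory Submission
  imports Defs
begin

text \<open>
  Each summand of P^-(K,eps) is a Delta-kelleyfication, and Delta-kelleyfication is idempotent
  and commutes with coproducts, so P^-(K,eps) is Delta-generated. A precubical map f induces
  |f|_geom, continuous by the universal property of the quotient |K|_geom; postcomposition
  with it is continuous for the compact-open topology, and Delta-kelleyfication is functorial.
  Since |f|_geom sends |c|_geom phi to |f c|_geom phi and f preserves initial vertices,
  postcomposition maps P^-_alpha(K,eps) into P^-_(f alpha)(L,eps), and the functor laws
  follow from the same identity.
\<close>

section \<open>Final topologies and Delta-kelleyfication\<close>

lemma topspace_final_topology:
  assumes "\<forall>p\<in>F. snd p ` topspace (fst p) \<subseteq> S"
  shows "topspace (final_topology S F) = S"
proof -
  have "{x \<in> topspace (fst p). snd p x \<in> S} = topspace (fst p)" if "p \<in> F" for p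
    using assms that by blast
  then have "openin (final_topology S F) S"
    by (simp add: openin_final_topology final_open_def)
  moreover have "topspace (final_topology S F) \<subseteq> S"
    by (metis final_open_def openin_final_topology openin_topspace)
  ultimately show ?thesis
    using openin_subset by blast
qed

lemma continuous_map_into_final_topology:
  assumes "\<forall>p\<in>F. snd p ` topspace (fst p) \<subseteq> S" and "p \<in> F"
  shows "continuous_map (fst p) (final_topology S F) (snd p)"
  using assms by (auto simp: continuous_map topspace_final_topology openin_final_topology final_open_def)

lemma continuous_map_from_final_topology:
  assumes "\<forall>p\<in>F. snd p ` topspace (fst p) \<subseteq> S" and "h ` S \<subseteq> topspace Y"
    and "\<forall>p\<in>F. continuous_map (fst p) Y (h \<circ> snd p)"
  shows "continuous_map (final_topology S F) Y h"
  unfolding continuous_map topspace_final_topology[OF assms(1)]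
proof (intro conjI allI impI)
  fix U assume U: "openin Y U"
  have "openin (fst p) {x \<in> topspace (fst p). snd p x \<in> {x \<in> S. h x \<in> U}}" if "p \<in> F" for p
  proof -
    have "{x \<in> topspace (fst p). snd p x \<in> {x \<in> S. h x \<in> U}} = {x \<in> topspace (fst p). (h \<circ> snd p) x \<in> U}"
      using assms(1) that by auto
    then show ?thesis
      using assms(3) that U by (metis openin_continuous_map_preimage)
  qed
  then show "openin (final_topology S F) {x \<in> S. h x \<in> U}"
    by (simp add: openin_final_topology final_open_def)
qed (use assms(2) in simp)

lemma delta_kelleyfy_sources_in_topspace:
  "\<forall>p\<in>{(simplex_top n, \<sigma>) | n \<sigma>. continuous_map (simplex_top n) X \<sigma>}.
      snd p ` topspace (fst p) \<subseteq> topspace X"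
  by (auto dest: continuous_map_image_subset_topspace)

lemma topspace_delta_kelleyfy [simp]: "topspace (delta_kelleyfy X) = topspace X"
  unfolding delta_kelleyfy_def by (rule topspace_final_topology[OF delta_kelleyfy_sources_in_topspace])

lemma openin_delta_kelleyfy: "openin X U \<Longrightarrow> openin (delta_kelleyfy X) U"
  unfolding delta_kelleyfy_def openin_final_topology final_open_def
  by (auto simp: openin_subset openin_continuous_map_preimage)

lemma continuous_map_delta_kelleyfy_id: "continuous_map (delta_kelleyfy X) X (\<lambda>x. x)"
  unfolding continuous_map
proof (intro conjI allI impI)
  fix U assume "openin X U"
  moreover have "{x \<in> topspace X. x \<in> U} = U"
    using openin_subset[OF calculation] by blast
  ultimately show "openin (delta_kelleyfy X) {x \<in> topspace (delta_kelleyfy X). x \<in> U}"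
    by (simp add: openin_delta_kelleyfy)
qed simp

lemma continuous_map_simplex_delta_kelleyfy_iff:
  "continuous_map (simplex_top n) (delta_kelleyfy X) \<sigma> \<longleftrightarrow> continuous_map (simplex_top n) X \<sigma>"
proof
  assume "continuous_map (simplex_top n) (delta_kelleyfy X) \<sigma>"
  then show "continuous_map (simplex_top n) X \<sigma>"
    using continuous_map_compose[OF _ continuous_map_delta_kelleyfy_id] by (fastforce simp: o_def)
next
  assume "continuous_map (simplex_top n) X \<sigma>"
  then show "continuous_map (simplex_top n) (delta_kelleyfy X) \<sigma>"
    unfolding delta_kelleyfy_def
    using continuous_map_into_final_topology[OF delta_kelleyfy_sources_in_topspace, of "(simplex_top n, \<sigma>)"]
    by auto
qed

lemma continuous_map_from_delta_kelleyfy: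
  assumes "h ` topspace X \<subseteq> topspace Y"
    and "\<And>n \<sigma>. continuous_map (simplex_top n) X \<sigma> \<Longrightarrow> continuous_map (simplex_top n) Y (h \<circ> \<sigma>)"
  shows "continuous_map (delta_kelleyfy X) Y h"
  unfolding delta_kelleyfy_def
  by (rule continuous_map_from_final_topology[OF delta_kelleyfy_sources_in_topspace]) (use assms in auto)

lemma continuous_map_delta_kelleyfy:
  assumes "continuous_map X Y h"
  shows "continuous_map (delta_kelleyfy X) (delta_kelleyfy Y) h"
proof (rule continuous_map_from_delta_kelleyfy)
  show "h ` topspace X \<subseteq> topspace (delta_kelleyfy Y)"
    using assms by (simp add: continuous_map_image_subset_topspace)
  show "continuous_map (simplex_top n) (delta_kelleyfy Y) (h \<circ> \<sigma>)"
    if "continuous_map (simplex_top n) X \<sigma>" for n \<sigma>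
    using continuous_map_compose[OF that assms] by (simp add: continuous_map_simplex_delta_kelleyfy_iff)
qed

lemma delta_generated_delta_kelleyfy: "delta_generated (delta_kelleyfy X)"
  unfolding delta_generated_def delta_kelleyfy_def[of "delta_kelleyfy X"]
  by (simp add: continuous_map_simplex_delta_kelleyfy_iff) (simp add: delta_kelleyfy_def)

lemma delta_generated_sum_topology:
  assumes "\<And>i. i \<in> I \<Longrightarrow> delta_generated (Y i)"
  shows "delta_generated (sum_topology Y I)"
  unfolding delta_generated_def topology_eq
proof (intro allI iffI)
  fix U
  assume "openin (sum_topology Y I) U"
  then show "openin (delta_kelleyfy (sum_topology Y I)) U"
    by (rule openin_delta_kelleyfy)
next
  fix U
  assume "openin (delta_kelleyfy (sum_topology Y I)) U"
  then have U: "final_open (topspace (sum_topology Y I))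
      {(simplex_top n, \<sigma>) | n \<sigma>. continuous_map (simplex_top n) (sum_topology Y I) \<sigma>} U"
    unfolding delta_kelleyfy_def openin_final_topology .
  have "openin (delta_kelleyfy (Y i)) {x. (i, x) \<in> U}" if i: "i \<in> I" for i
    unfolding delta_kelleyfy_def openin_final_topology final_open_def
  proof (intro conjI ballI)
    show "{x. (i, x) \<in> U} \<subseteq> topspace (Y i)"
      using U unfolding final_open_def by auto
    fix p assume "p \<in> {(simplex_top n, \<sigma>) | n \<sigma>. continuous_map (simplex_top n) (Y i) \<sigma>}"
    then obtain n \<sigma> where p: "p = (simplex_top n, \<sigma>)" and \<sigma>: "continuous_map (simplex_top n) (Y i) \<sigma>"
      by blast
    have "continuous_map (simplex_top n) (sum_topology Y I) ((\<lambda>x. (i, x)) \<circ> \<sigma>)"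
      using continuous_map_compose[OF \<sigma> continuous_map_component_injection[OF i, of Y]] .
    then have "(simplex_top n, (\<lambda>x. (i, x)) \<circ> \<sigma>)
        \<in> {(simplex_top n, \<sigma>) | n \<sigma>. continuous_map (simplex_top n) (sum_topology Y I) \<sigma>}"
      by blast
    then have "openin (simplex_top n) {x \<in> topspace (simplex_top n). ((\<lambda>x. (i, x)) \<circ> \<sigma>) x \<in> U}"
      using U unfolding final_open_def by fastforce
    then show "openin (fst p) {x \<in> topspace (fst p). snd p x \<in> {x. (i, x) \<in> U}}"
      using p by simp
  qed
  then show "openin (sum_topology Y I) U"
    using U assms by (auto simp: openin_sum_topology final_open_def delta_generated_def)
qed

lemma continuous_map_from_sum_topology:
  assumes "\<And>i. i \<in> I \<Longrightarrow> continuous_map (X i) Y (\<lambda>x. h (i, x))"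
  shows "continuous_map (sum_topology X I) Y h"
  unfolding continuous_map
proof (intro conjI allI impI)
  show "h ` topspace (sum_topology X I) \<subseteq> topspace Y"
    using assms by (force dest: continuous_map_image_subset_topspace)
  fix U assume U: "openin Y U"
  have "openin (X i) {x \<in> topspace (X i). h (i, x) \<in> U}" if "i \<in> I" for i
    using openin_continuous_map_preimage[OF assms[OF that] U] .
  then show "openin (sum_topology X I) {x \<in> topspace (sum_topology X I). h x \<in> U}"
    unfolding openin_sum_topology by (auto elim!: back_subst[of "openin _"])
qed

section \<open>Mapping spaces\<close>

lemma topspace_interval_top [simp]: "topspace (interval_top e) = {0..e}"
  by (simp add: interval_top_def)

lemma topspace_compact_open [simp]: "topspace (compact_open e X) = path_carrier e X"
  unfolding compact_open_def topology_generated_by_topspace by blast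

lemma restrict_compose_in_path_carrier:
  assumes "continuous_map X Y h" and "\<gamma> \<in> path_carrier e X"
  shows "restrict (h \<circ> \<gamma>) {0..e} \<in> path_carrier e Y"
  using continuous_map_compose[of "interval_top e" X \<gamma> Y h] assms
  by (simp add: path_carrier_def)

lemma continuous_map_compact_open_compose:
  assumes h: "continuous_map X Y h"
  shows "continuous_map (compact_open e X) (compact_open e Y) (\<lambda>\<gamma>. restrict (h \<circ> \<gamma>) {0..e})"
  unfolding compact_open_def[of e Y]
proof (rule continuous_on_generated_topo)
  let ?h = "\<lambda>\<gamma>. restrict (h \<circ> \<gamma>) {0..e}"
  show "?h ` topspace (compact_open e X)
     \<subseteq> \<Union> (insert (path_carrier e Y)
            {{\<gamma> \<in> path_carrier e Y. \<gamma> ` C \<subseteq> U} |C U. compact C \<and> C \<subseteq> {0..e} \<and> openin Y U})"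
    using restrict_compose_in_path_carrier[OF h] by auto
  fix U assume U: "U \<in> insert (path_carrier e Y)
            {{\<gamma> \<in> path_carrier e Y. \<gamma> ` C \<subseteq> U} |C U. compact C \<and> C \<subseteq> {0..e} \<and> openin Y U}"
  show "openin (compact_open e X) (?h -` U \<inter> topspace (compact_open e X))"
  proof (cases "U = path_carrier e Y")
    case True
    then have "?h -` U \<inter> topspace (compact_open e X) = topspace (compact_open e X)"
      using restrict_compose_in_path_carrier[OF h] by auto
    then show ?thesis by (metis openin_topspace)
  next
    case False
    then obtain C V where CV: "U = {\<gamma> \<in> path_carrier e Y. \<gamma> ` C \<subseteq> V}" "compact C" "C \<subseteq> {0..e}" "openin Y V"
      using U by blast
    have "\<gamma> ` {0..e} \<subseteq> topspace X" if "\<gamma> \<in> path_carrier e X" for \<gamma>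
      using that continuous_map_image_subset_topspace[of "interval_top e" X \<gamma>]
      by (simp add: path_carrier_def)
    then have "?h -` U \<inter> topspace (compact_open e X)
        = {\<gamma> \<in> path_carrier e X. \<gamma> ` C \<subseteq> {x \<in> topspace X. h x \<in> V}}"
      using CV(1,3) restrict_compose_in_path_carrier[OF h] by (fastforce simp: subset_iff)
    moreover have "openin X {x \<in> topspace X. h x \<in> V}"
      using h CV(4) by (rule openin_continuous_map_preimage)
    then have "openin (compact_open e X) {\<gamma> \<in> path_carrier e X. \<gamma> ` C \<subseteq> {x \<in> topspace X. h x \<in> V}}"
      unfolding compact_open_def using CV(2,3) by (intro topology_generated_by_Basis) blast
    ultimately show ?thesis by simp
  qed
qed

lemma continuous_map_TOP_compose:
  "continuous_map X Y h \<Longrightarrow> continuous_map (TOP e X) (TOP e Y) (\<lambda>\<gamma>. restrict (h \<circ> \<gamma>) {0..e})"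
  unfolding TOP_def by (intro continuous_map_delta_kelleyfy continuous_map_compact_open_compose)

section \<open>Geometric realization of precubical maps\<close>

definition cell_map :: "(nat \<Rightarrow> 'a \<Rightarrow> 'b) \<Rightarrow> nat \<times> ('a \<times> (nat \<Rightarrow> real)) \<Rightarrow> nat \<times> ('b \<times> (nat \<Rightarrow> real))" where
  "cell_map f x = (fst x, f (fst x) (fst (snd x)), snd (snd x))"

lemma precubical_map_id: "precubical_map K dK K dK (\<lambda>n c. c)"
  by (simp add: precubical_map_def)

lemma precubical_map_compose:
  assumes "precubical_map K dK L dL f" and "precubical_map L dL M dM g"
  shows "precubical_map K dK M dM (\<lambda>n. g n \<circ> f n)"
  unfolding precubical_map_def
proof (intro conjI allI impI ballI)
  show "(g n \<circ> f n) c \<in> M n" if "c \<in> K n" for n c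
    using assms that unfolding precubical_map_def by simp
  fix n i a c assume c: "c \<in> K (Suc n) \<and> 1 \<le> i \<and> i \<le> Suc n"
  then have "f (Suc n) c \<in> L (Suc n)"
    using assms(1) unfolding precubical_map_def by simp
  then show "(g n \<circ> f n) (dK (Suc n) i a c) = dM (Suc n) i a ((g (Suc n) \<circ> f (Suc n)) c)"
    using assms c unfolding precubical_map_def by simp
qed

lemma rtranclp_symclp_map:
  assumes "\<And>x y. R x y \<Longrightarrow> S (h x) (h y)" and "(symclp R)\<^sup>*\<^sup>* x y"
  shows "(symclp S)\<^sup>*\<^sup>* (h x) (h y)"
  using assms(2)
proof (induction rule: rtranclp_induct)
  case (step y z)
  then have "symclp S (h y) (h z)"
    using assms(1) by (auto simp: symclp_def)
  with step.IH show ?case by simp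
qed simp

lemma real_rel_cell_map:
  assumes "precubical_map K dK L dL f" and "real_rel K dK x y"
  shows "real_rel L dL (cell_map f x) (cell_map f y)"
proof -
  obtain n c i a s where h: "c \<in> K (Suc n)" "1 \<le> i" "i \<le> Suc n" "s \<in> cube n"
    "x = (n, (dK (Suc n) i a c, s))" "y = (Suc n, (c, coface i a s))"
    using assms(2) unfolding real_rel_def by blast
  have "f (Suc n) c \<in> L (Suc n)" and "f n (dK (Suc n) i a c) = dL (Suc n) i a (f (Suc n) c)"
    using assms(1) h(1-3) unfolding precubical_map_def by blast+
  then show ?thesis
    unfolding real_rel_def cell_map_def using h by auto
qed

text \<open>
  geom_map evaluates f on an arbitrary representative chosen by SOME; the choice does not
  matter because cell_map f preserves the generating relation of the quotient.
\<close>

lemma geom_map_real_class: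
  assumes "precubical_map K dK L dL f"
  shows "geom_map L dL f (real_class K dK x) = real_class L dL (cell_map f x)"
proof -
  define p where "p = (SOME p. p \<in> real_class K dK x)"
  have "p \<in> real_class K dK x"
    unfolding p_def by (rule someI[of _ x]) (simp add: real_class_def)
  then have "(symclp (real_rel K dK))\<^sup>*\<^sup>* x p"
    by (simp add: real_class_def)
  then have "(symclp (real_rel L dL))\<^sup>*\<^sup>* (cell_map f x) (cell_map f p)"
    by (rule rtranclp_symclp_map[rotated]) (rule real_rel_cell_map[OF assms])
  then have "real_class L dL (cell_map f p) = real_class L dL (cell_map f x)"
    using equivp_rtranclp_symclp unfolding real_class_def equivp_def by metis
  then show ?thesis
    unfolding geom_map_def p_def[symmetric] cell_map_def by (cases p) auto
qed

lemma geom_map_geom_cube: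
  "precubical_map K dK L dL f \<Longrightarrow> geom_map L dL f (geom_cube K dK n c t) = geom_cube L dL n (f n c) t"
  by (simp add: geom_cube_def geom_map_real_class cell_map_def)

lemma init_vertex_precubical_map:
  assumes "precubical K dK" and "precubical_map K dK L dL f" and "c \<in> K n"
  shows "f 0 (init_vertex dK n c) = init_vertex dL n (f n c)"
  using assms(3)
proof (induction n arbitrary: c)
  case (Suc n)
  have "dK (Suc n) (Suc n) False c \<in> K n"
    using assms(1) Suc.prems unfolding precubical_def by simp
  moreover have "f n (dK (Suc n) (Suc n) False c) = dL (Suc n) (Suc n) False (f (Suc n) c)"
    using assms(2) Suc.prems unfolding precubical_map_def by simp
  ultimately show ?case
    using Suc.IH by simp
qed simp

lemma continuous_map_cell_map:
  assumes "precubical_map K dK L dL f"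
  shows "continuous_map (cells_top K) (cells_top L) (cell_map f)"
  unfolding cells_top_def
proof (rule continuous_map_from_sum_topology)
  fix n :: nat
  have "continuous_map (discrete_topology (K n)) (discrete_topology (L n)) (f n)"
    using assms unfolding precubical_map_def by auto
  then have "continuous_map (prod_topology (discrete_topology (K n)) (cube_top n))
      (prod_topology (discrete_topology (L n)) (cube_top n)) (\<lambda>x. (f n (fst x), snd x))"
    by (intro continuous_map_pairedI continuous_map_snd continuous_map_compose[OF continuous_map_fst, unfolded o_def])
  from continuous_map_compose[OF this continuous_map_component_injection[of n UNIV
      "\<lambda>n. prod_topology (discrete_topology (L n)) (cube_top n)", simplified]]
  show "continuous_map (prod_topology (discrete_topology (K n)) (cube_top n))
      (sum_topology (\<lambda>n. prod_topology (discrete_topology (L n)) (cube_top n)) UNIV)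
      (\<lambda>x. cell_map f (n, x))"
    by (simp add: o_def cell_map_def)
qed

lemma continuous_map_real_class: "continuous_map (cells_top K) (geom_real K dK) (real_class K dK)"
  unfolding geom_real_def
  using continuous_map_into_final_topology[of "{(cells_top K, real_class K dK)}"] by simp

lemma continuous_map_geom_map:
  assumes "precubical_map K dK L dL f"
  shows "continuous_map (geom_real K dK) (geom_real L dL) (geom_map L dL f)"
proof -
  have "continuous_map (cells_top K) (geom_real L dL) (real_class L dL \<circ> cell_map f)"
    using continuous_map_cell_map[OF assms] continuous_map_real_class by (rule continuous_map_compose)
  then have cont: "continuous_map (cells_top K) (geom_real L dL) (geom_map L dL f \<circ> real_class K dK)"
    by (simp add: o_def geom_map_real_class[OF assms])
  show ?thesis
    unfolding geom_real_def[of K dK]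
  proof (rule continuous_map_from_final_topology)
    show "geom_map L dL f ` real_class K dK ` topspace (cells_top K) \<subseteq> topspace (geom_real L dL)"
      using continuous_map_image_subset_topspace[OF cont] by (simp add: image_comp)
  qed (use cont in simp_all)
qed

section \<open>The homotopy branching space\<close>

lemma restrict_geom_map_geom_cube_path:
  assumes "precubical_map K dK L dL f"
  shows "restrict (geom_map L dL f \<circ> restrict (geom_cube K dK n c \<circ> \<phi>) {0..e}) {0..e}
       = restrict (geom_cube L dL n (f n c) \<circ> \<phi>) {0..e}"
  by (intro restrict_ext) (simp add: geom_map_geom_cube[OF assms])

lemma geom_map_path_in_Pminus_set:
  assumes "precubical K dK" and f: "precubical_map K dK L dL f"
    and "\<gamma> \<in> Pminus_set K dK e \<alpha>"
  shows "restrict (geom_map L dL f \<circ> \<gamma>) {0..e} \<in> Pminus_set L dL e (f 0 \<alpha>)"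
proof -
  obtain n c \<phi> where \<gamma>: "\<gamma> = restrict (geom_cube K dK n c \<circ> \<phi>) {0..e}"
    and c: "1 \<le> n" "c \<in> K n" "init_vertex dK n c = \<alpha>" and \<phi>: "\<phi> \<in> natural_paths n e"
    using assms(3) unfolding Pminus_set_def init_cubes_def by blast
  have "f n c \<in> L n"
    using f c(2) unfolding precubical_map_def by simp
  moreover have "init_vertex dL n (f n c) = f 0 \<alpha>"
    using init_vertex_precubical_map[OF assms(1) f c(2)] c(3) by simp
  ultimately have "(n, f n c) \<in> init_cubes L dL (f 0 \<alpha>)"
    using c(1) by (simp add: init_cubes_def)
  then show ?thesis
    unfolding \<gamma> restrict_geom_map_geom_cube_path[OF f] Pminus_set_def using \<phi> by blast
qed

lemma continuous_map_Pminus_alpha: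
  assumes "precubical K dK" and f: "precubical_map K dK L dL f"
  shows "continuous_map (Pminus_alpha K dK e \<alpha>) (Pminus_alpha L dL e (f 0 \<alpha>))
           (\<lambda>\<gamma>. restrict (geom_map L dL f \<circ> \<gamma>) {0..e})"
  unfolding Pminus_alpha_def
proof (intro continuous_map_delta_kelleyfy)
  show "continuous_map (subtopology (TOP e (geom_real K dK)) (Pminus_set K dK e \<alpha>))
     (subtopology (TOP e (geom_real L dL)) (Pminus_set L dL e (f 0 \<alpha>)))
     (\<lambda>\<gamma>. restrict (geom_map L dL f \<circ> \<gamma>) {0..e})"
    using continuous_map_TOP_compose[OF continuous_map_geom_map[OF f]]
      geom_map_path_in_Pminus_set[OF assms]
    by (auto simp: continuous_map_in_subtopology continuous_map_from_subtopology)
qed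

lemma continuous_map_Pminus_map:
  assumes "precubical K dK" and f: "precubical_map K dK L dL f"
  shows "continuous_map (Pminus K dK e) (Pminus L dL e) (Pminus_map L dL f e)"
  unfolding Pminus_def[of K dK e]
proof (rule continuous_map_from_sum_topology)
  fix \<alpha> assume "\<alpha> \<in> K 0"
  then have "f 0 \<alpha> \<in> L 0"
    using f unfolding precubical_map_def by simp
  from continuous_map_compose[OF continuous_map_Pminus_alpha[OF assms]
      continuous_map_component_injection[OF this, of "Pminus_alpha L dL e"]]
  show "continuous_map (Pminus_alpha K dK e \<alpha>) (Pminus L dL e) (\<lambda>\<gamma>. Pminus_map L dL f e (\<alpha>, \<gamma>))"
    by (simp add: Pminus_def Pminus_map_def o_def)
qed

lemma topspace_PminusE:
  assumes "p \<in> topspace (Pminus K dK e)"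
  obtains \<alpha> n c \<phi> where "p = (\<alpha>, restrict (geom_cube K dK n c \<circ> \<phi>) {0..e})"
proof -
  have "snd p \<in> Pminus_set K dK e (fst p)"
    using assms by (auto simp: Pminus_def Pminus_alpha_def)
  then obtain n c \<phi> where "snd p = restrict (geom_cube K dK n c \<circ> \<phi>) {0..e}"
    unfolding Pminus_set_def by blast
  then show thesis
    by (intro that[of "fst p"]) (simp add: prod_eq_iff)
qed

lemma Pminus_map_geom_cube_path:
  "precubical_map K dK L dL f \<Longrightarrow>
    Pminus_map L dL f e (\<alpha>, restrict (geom_cube K dK n c \<circ> \<phi>) {0..e})
      = (f 0 \<alpha>, restrict (geom_cube L dL n (f n c) \<circ> \<phi>) {0..e})"
  by (simp add: Pminus_map_def restrict_geom_map_geom_cube_path)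

lemma Pminus_map_id:
  assumes "p \<in> topspace (Pminus K dK e)"
  shows "Pminus_map K dK (\<lambda>n c. c) e p = p"
  using assms
proof (rule topspace_PminusE)
  fix \<alpha> n c \<phi> assume "p = (\<alpha>, restrict (geom_cube K dK n c \<circ> \<phi>) {0..e})"
  then show ?thesis
    by (simp add: Pminus_map_geom_cube_path[OF precubical_map_id])
qed

lemma Pminus_map_compose:
  assumes "p \<in> topspace (Pminus K dK e)"
    and f: "precubical_map K dK L dL f" and g: "precubical_map L dL M dM g"
  shows "Pminus_map M dM (\<lambda>n. g n \<circ> f n) e p = Pminus_map M dM g e (Pminus_map L dL f e p)"
  using assms(1)
proof (rule topspace_PminusE)
  fix \<alpha> n c \<phi> assume "p = (\<alpha>, restrict (geom_cube K dK n c \<circ> \<phi>) {0..e})"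
  then show ?thesis
    by (simp add: Pminus_map_geom_cube_path[OF f] Pminus_map_geom_cube_path[OF g]
        Pminus_map_geom_cube_path[OF precubical_map_compose[OF f g]])
qed

theorem proposition4p3:
  fixes e :: real
    and K :: "nat \<Rightarrow> 'a set" and dK :: "nat \<Rightarrow> nat \<Rightarrow> bool \<Rightarrow> 'a \<Rightarrow> 'a"
    and L :: "nat \<Rightarrow> 'b set" and dL :: "nat \<Rightarrow> nat \<Rightarrow> bool \<Rightarrow> 'b \<Rightarrow> 'b"
    and M :: "nat \<Rightarrow> 'c set" and dM :: "nat \<Rightarrow> nat \<Rightarrow> bool \<Rightarrow> 'c \<Rightarrow> 'c"
    and f :: "nat \<Rightarrow> 'a \<Rightarrow> 'b" and g :: "nat \<Rightarrow> 'b \<Rightarrow> 'c"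
  assumes "0 < e" and "e < 1"
    and "precubical K dK" and "precubical L dL" and "precubical M dM"
    and "precubical_map K dK L dL f" and "precubical_map L dL M dM g"
  shows "delta_generated (Pminus K dK e) \<and>
         continuous_map (Pminus K dK e) (Pminus L dL e) (Pminus_map L dL f e) \<and>
         (\<forall>p \<in> topspace (Pminus K dK e). Pminus_map K dK (\<lambda>n c. c) e p = p) \<and>
         (\<forall>p \<in> topspace (Pminus K dK e).
           Pminus_map M dM (\<lambda>n. g n \<circ> f n) e p = Pminus_map M dM g e (Pminus_map L dL f e p))"
proof (intro conjI ballI)
  show "delta_generated (Pminus K dK e)"
    unfolding Pminus_def Pminus_alpha_def
    by (intro delta_generated_sum_topology delta_generated_delta_kelleyfy)
  show "continuous_map (Pminus K dK e) (Pminus L dL e) (Pminus_map L dL f e)"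
    using assms(3,6) by (rule continuous_map_Pminus_map)
  show "Pminus_map K dK (\<lambda>n c. c) e p = p" if "p \<in> topspace (Pminus K dK e)" for p
    using that by (rule Pminus_map_id)
  show "Pminus_map M dM (\<lambda>n. g n \<circ> f n) e p = Pminus_map M dM g e (Pminus_map L dL f e p)"
    if "p \<in> topspace (Pminus K dK e)" for p
    using that assms(6,7) by (rule Pminus_map_compose)
qed

end
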